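(* For every non-singular $\rho\in\mathcal{D}$ at which $f$ is differentiable and every $\alpha>0$, $$\langle\nabla f(\rho),\rho(\alpha)-\rho\rangle\le-\frac{D(\rho(\alpha),\rho)}{\alpha}.$$
   Context: $\mathcal{D}=\{\rho\in\mathbb{C}^{d\times d}:\rho\succeq0,\ \operatorname{tr}\rho=1\}$; $f$ is a convex function on $d\times d$ Hermitian matrices; $\langle A,B\rangle=\operatorname{tr}(A^{\mathrm H}B)$ and $\nabla f(\rho)$ is the Hermitian gradient w.r.t. it. $\rho(\alpha):=\exp[\log\rho-\alpha\nabla f(\rho)]/\operatorname{tr}\exp[\log\rho-\alpha\nabla f(\rho)]$. $D(\sigma,\rho)=\operatorname{tr}(\sigma\log\sigma)-\operatorname{tr}(\sigma\log\rho)-\operatorname{tr}(\sigma-\rho)$ (quantum relative entropy, with $0\log0=0$). *)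

theory Defs
  imports "HOL-Analysis.Analysis"
begin

text \<open>Complex d x d matrices are modelled as complex^'n^'n for a finite index type 'n,
  so d = CARD('n) is arbitrary but fixed.\<close>

definition cadj :: "complex^'n^'n \<Rightarrow> complex^'n^'n" where
  "cadj A = (\<chi> i j. cnj (A $ j $ i))"

definition hermitian :: "complex^'n^'n \<Rightarrow> bool" where
  "hermitian A \<longleftrightarrow> cadj A = A"

definition unitary :: "complex^'n^'n \<Rightarrow> bool" where
  "unitary U \<longleftrightarrow> cadj U ** U = mat 1"

definition rdiag :: "real^'n \<Rightarrow> complex^'n^'n" where
  "rdiag v = (\<chi> i j. if i = j then complex_of_real (v $ i) else 0)"

definition herm_fun :: "(real \<Rightarrow> real) \<Rightarrow> complex^'n^'n \<Rightarrow> complex^'n^'n" where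
  "herm_fun g A = (SOME B. \<exists>U lam. unitary U \<and> A = U ** rdiag lam ** cadj U
                       \<and> B = U ** rdiag (\<chi> i. g (lam $ i)) ** cadj U)"

definition mexp :: "complex^'n^'n \<Rightarrow> complex^'n^'n" where
  "mexp A = herm_fun exp A"

definition mlog :: "complex^'n^'n \<Rightarrow> complex^'n^'n" where
  "mlog A = herm_fun ln A"

definition mat_inner :: "complex^'n^'n \<Rightarrow> complex^'n^'n \<Rightarrow> complex" where
  "mat_inner A B = trace (cadj A ** B)"

definition psd :: "complex^'n^'n \<Rightarrow> bool" where
  "psd A \<longleftrightarrow> hermitian A \<and> (\<forall>v. 0 \<le> Re (\<Sum>i\<in>UNIV. cnj (v $ i) * (A *v v) $ i))"

definition density :: "complex^'n^'n \<Rightarrow> bool" where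
  "density \<rho> \<longleftrightarrow> psd \<rho> \<and> trace \<rho> = 1"

definition md_step :: "complex^'n^'n \<Rightarrow> complex^'n^'n \<Rightarrow> real \<Rightarrow> complex^'n^'n" where
  "md_step \<rho> G \<alpha> = (let M = mexp (mlog \<rho> - \<alpha> *\<^sub>R G) in (\<chi> i j. M $ i $ j / trace M))"

text \<open>Quantum relative entropy; tr(sigma log sigma) uses x ln x (which is 0 at 0, i.e. 0 log 0 = 0).
  The quantity is real for Hermitian arguments; we take its real part.\<close>
definition qrel_ent :: "complex^'n^'n \<Rightarrow> complex^'n^'n \<Rightarrow> real" where
  "qrel_ent \<sigma> \<rho> = Re (trace (herm_fun (\<lambda>x. x * ln x) \<sigma>) - trace (\<sigma> ** mlog \<rho>) - trace (\<sigma> - \<rho>))"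

end

theory Submission
  imports Defs
begin

text \<open>Diagonalise \<rho> = U diag(p) U^H and H = log \<rho> - \<alpha> G = V diag(\<mu>) V^H. Then \<rho>(\<alpha>) = exp H / Z
  with Z = tr exp H, and a direct computation gives D(\<rho>(\<alpha>), \<rho>) = - ln Z - \<alpha> tr(\<rho>(\<alpha>) G). The claim
  thus reduces to - \<alpha> tr(\<rho> G) \<le> ln Z, which is the Gibbs variational inequality
  tr(\<rho> H) - tr(\<rho> log \<rho>) \<le> ln tr exp H. In the two eigenbases, tr(\<rho> H) pairs p with \<mu> through the
  doubly stochastic matrix |(V^H U)_jl|^2, so the matrix inequality follows from Jensen's inequality
  for exp and the scalar Gibbs inequality. The spectral theorem needed for all of this is proved by
  maximising the quadratic form on the unit vectors orthogonal to the eigenvectors already found.\<close>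

definition cinner :: "complex^'n \<Rightarrow> complex^'n \<Rightarrow> complex" where
  "cinner x y = (\<Sum>i\<in>UNIV. cnj (x$i) * y$i)"

definition orthonormal :: "(complex^'n) set \<Rightarrow> bool" where
  "orthonormal S \<longleftrightarrow> (\<forall>v\<in>S. \<forall>w\<in>S. cinner v w = (if v = w then 1 else 0))"

lemma cinner_add_left: "cinner (x + y) z = cinner x z + cinner y z"
  by (simp add: cinner_def distrib_right sum.distrib)

lemma cinner_add_right: "cinner x (y + z) = cinner x y + cinner x z"
  by (simp add: cinner_def distrib_left sum.distrib)

lemma cinner_diff_right: "cinner x (y - z) = cinner x y - cinner x z"
  by (simp add: cinner_def right_diff_distrib sum_subtractf)

lemma cinner_scale_left: "cinner (c *s x) y = cnj c * cinner x y"
  by (simp add: cinner_def sum_distrib_left algebra_simps)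

lemma cinner_scale_right: "cinner x (c *s y) = c * cinner x y"
  by (simp add: cinner_def sum_distrib_left algebra_simps)

lemma cinner_zero_right [simp]: "cinner x 0 = 0"
  by (simp add: cinner_def)

lemma cinner_sum_right: "finite S \<Longrightarrow> cinner x (sum f S) = (\<Sum>v\<in>S. cinner x (f v))"
  unfolding cinner_def by (simp add: sum_component sum_distrib_left) (rule sum.swap)

lemma cinner_commute: "cinner y x = cnj (cinner x y)"
  by (simp add: cinner_def mult.commute)

lemma cnj_mult_self: "cnj z * z = of_real ((cmod z)\<^sup>2)"
  using complex_norm_square[of z] by (simp add: mult.commute)

lemma cinner_self: "cinner x x = of_real ((norm x)\<^sup>2)"
proof -
  have "(norm x)\<^sup>2 = (\<Sum>i\<in>UNIV. (cmod (x$i))\<^sup>2)"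
    by (simp add: norm_vec_def L2_set_def sum_nonneg)
  then show ?thesis by (simp add: cinner_def cnj_mult_self del: of_real_power)
qed

lemma of_real_vector_scalar_mult: "complex_of_real r *s x = r *\<^sub>R x"
  by (simp add: vec_eq_iff) (simp add: scaleR_conv_of_real)

lemma continuous_on_cinner_right: "continuous_on S (cinner v)"
  unfolding cinner_def by (intro continuous_intros)

lemma continuous_on_cinner_quadratic: "continuous_on S (\<lambda>x. Re (cinner x (A *v x)))"
  unfolding cinner_def matrix_vector_mult_def by (simp, intro continuous_intros)

lemma hermitian_entry: "hermitian A \<Longrightarrow> A$i$j = cnj (A$j$i)"
  unfolding hermitian_def cadj_def by (metis vec_lambda_beta)

lemma cinner_hermitian: assumes "hermitian A" shows "cinner x (A *v y) = cinner (A *v x) y"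
proof -
  have "cinner x (A *v y) = (\<Sum>i\<in>UNIV. \<Sum>j\<in>UNIV. cnj (x$i) * A$i$j * y$j)"
    by (simp add: cinner_def matrix_vector_mult_def sum_distrib_left mult.assoc)
  also have "\<dots> = (\<Sum>j\<in>UNIV. (\<Sum>i\<in>UNIV. cnj (x$i) * A$i$j) * y$j)"
    by (subst sum.swap) (simp add: sum_distrib_right)
  also have "\<dots> = cinner (A *v x) y"
  proof -
    have "cnj ((A *v x)$j) = (\<Sum>i\<in>UNIV. cnj (x$i) * A$i$j)" for j
      by (simp add: matrix_vector_mult_def hermitian_entry[OF assms, of i j for i] mult.commute)
    then show ?thesis by (simp add: cinner_def)
  qed
  finally show ?thesis .
qed

lemma hermitian_quadratic_real:
  assumes "hermitian A" shows "cinner x (A *v x) = of_real (Re (cinner x (A *v x)))"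
proof -
  have "cnj (cinner x (A *v x)) = cinner x (A *v x)"
    using cinner_commute[of x "A *v x"] cinner_hermitian[OF assms, of x x] by simp
  then show ?thesis by (metis Reals_cnj_iff complex_is_Real_iff of_real_Re)
qed

lemma nonpos_of_quadratic_nonpos:
  fixes c d :: real
  assumes "\<And>t. t > 0 \<Longrightarrow> 2*t*c + t\<^sup>2*d \<le> 0"
  shows "c \<le> 0"
proof (rule ccontr)
  assume "\<not> c \<le> 0"
  define t where "t = c / (\<bar>d\<bar> + 1)"
  have t: "t > 0" "t * \<bar>d\<bar> < c"
    using \<open>\<not> c \<le> 0\<close> by (auto simp: t_def field_simps)
  have "t * c < 2*t*c - t * (t * \<bar>d\<bar>)"
    using t by (simp add: algebra_simps)
  also have "\<dots> \<le> 2*t*c + t\<^sup>2*d"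
    using t by (simp add: power2_eq_square abs_if mult_le_0_iff)
  finally show False
    using assms[OF t(1)] t \<open>\<not> c \<le> 0\<close> by (smt (verit) mult_pos_pos)
qed

lemma quadratic_form_le_max_on_subspace:
  fixes A :: "complex^'n^'n"
  assumes C: "vec.subspace C" and z: "z \<in> C"
    and max: "\<And>w. w \<in> C \<Longrightarrow> norm w = 1 \<Longrightarrow> Re (cinner w (A *v w)) \<le> m"
  shows "Re (cinner z (A *v z)) \<le> m * (norm z)\<^sup>2"
proof (cases "z = 0")
  case False
  define w where "w = of_real (1 / norm z) *s z"
  have "w = (1 / norm z) *\<^sub>R z"
    unfolding w_def by (rule of_real_vector_scalar_mult)
  then have "norm w = 1"
    using False by simp
  moreover have "w \<in> C"
    unfolding w_def using C z by (rule vec.subspace_scale)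
  ultimately have "Re (cinner w (A *v w)) \<le> m" using max by blast
  moreover have "cinner w (A *v w) = of_real (1 / (norm z)\<^sup>2) * cinner z (A *v z)"
    by (simp add: w_def vec.scale cinner_scale_left cinner_scale_right power2_eq_square)
  ultimately show ?thesis
    using False by (simp add: field_simps)
qed simp

text \<open>A maximiser of the quadratic form over the unit sphere of a subspace that contains its image
  is an eigenvector: otherwise moving it along the residual u = A x - \<lambda> x increases the
  Rayleigh quotient to first order.\<close>
lemma hermitian_rayleigh_maximizer_eigenvector:
  fixes A :: "complex^'n^'n"
  assumes herm: "hermitian A" and C: "vec.subspace C"
    and x: "x \<in> C" "norm x = 1" and AxC: "A *v x \<in> C"
    and max: "\<And>z. z \<in> C \<Longrightarrow> norm z = 1
      \<Longrightarrow> Re (cinner z (A *v z)) \<le> Re (cinner x (A *v x))"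
  shows "A *v x = of_real (Re (cinner x (A *v x))) *s x"
proof -
  define lam where "lam = Re (cinner x (A *v x))"
  define u where "u = A *v x - of_real lam *s x"
  have uC: "u \<in> C"
    unfolding u_def using C x AxC by (intro vec.subspace_diff vec.subspace_scale)
  have xx: "cinner x x = 1" using x(2) by (simp add: cinner_self)
  have xAx: "cinner x (A *v x) = of_real lam"
    unfolding lam_def by (rule hermitian_quadratic_real[OF herm])
  have xu: "cinner x u = 0"
    by (simp add: u_def cinner_diff_right cinner_scale_right xAx xx)
  have ux: "cinner u x = 0"
    using xu cinner_commute[of u x] by simp
  have homogeneous: "Re (cinner z (A *v z)) \<le> lam * (norm z)\<^sup>2" if "z \<in> C" for z
    by (rule quadratic_form_le_max_on_subspace[OF C that]) (simp add: max lam_def)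
  have "(norm u)\<^sup>2 \<le> 0"
  proof (rule nonpos_of_quadratic_nonpos)
    fix t :: real
    define z where "z = x + of_real t *s u"
    have "A *v x = u + of_real lam *s x"
      by (simp add: u_def)
    then have uAx: "cinner u (A *v x) = of_real ((norm u)\<^sup>2)"
      by (simp add: cinner_add_right cinner_scale_right ux cinner_self)
    have xAu: "cinner x (A *v u) = of_real ((norm u)\<^sup>2)"
      using cinner_hermitian[OF herm, of x u] cinner_commute[of "A *v x" u] uAx by simp
    have "cinner z z = 1 + of_real (t\<^sup>2) * cinner u u"
      by (simp add: z_def cinner_add_left cinner_add_right cinner_scale_left cinner_scale_right
          xx xu ux power2_eq_square)
    then have nz: "(norm z)\<^sup>2 = 1 + t\<^sup>2 * (norm u)\<^sup>2"
      unfolding cinner_self by (metis of_real_1 of_real_add of_real_eq_iff of_real_mult)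
    have "Re (cinner z (A *v z)) = lam + 2*t*(norm u)\<^sup>2 + t\<^sup>2 * Re (cinner u (A *v u))"
      by (simp add: z_def vec.add vec.scale cinner_add_left cinner_add_right cinner_scale_left
          cinner_scale_right xAx uAx xAu power2_eq_square algebra_simps del: of_real_power)
    moreover have "z \<in> C"
      unfolding z_def using C x uC by (intro vec.subspace_add vec.subspace_scale)
    ultimately show "2*t*(norm u)\<^sup>2 + t\<^sup>2 * (Re (cinner u (A *v u)) - lam * (norm u)\<^sup>2) \<le> 0"
      using homogeneous[of z] nz by (simp add: algebra_simps)
  qed
  then have "u = 0" by simp
  then show ?thesis unfolding u_def lam_def by simp
qed

lemma orthonormal_complement_has_unit_vector:
  fixes S :: "(complex^'n) set"
  assumes fin: "finite S" and card: "card S < CARD('n)" and orth: "orthonormal S"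
  shows "\<exists>x. norm x = 1 \<and> (\<forall>v\<in>S. cinner v x = 0)"
proof -
  have "vec.span S \<noteq> UNIV"
  proof
    assume "vec.span S = UNIV"
    then have "vec.dim (UNIV::(complex^'n) set) \<le> card S"
      using vec.dim_le_card[of UNIV S] fin by auto
    then show False using card vec_dim_card by (metis not_le)
  qed
  then obtain x where x: "x \<notin> vec.span S" by auto
  define y where "y = x - (\<Sum>v\<in>S. cinner v x *s v)"
  have "(\<Sum>v\<in>S. cinner v x *s v) \<in> vec.span S"
    by (intro vec.span_sum vec.span_scale vec.span_base)
  then have "y \<noteq> 0" using x unfolding y_def by auto
  have y_orth: "cinner w y = 0" if w: "w \<in> S" for w
  proof -
    have "(\<Sum>v\<in>S. cinner w (cinner v x *s v)) = (\<Sum>v\<in>S. if v = w then cinner w x else 0)"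
      by (rule sum.cong) (use w orth in \<open>auto simp: orthonormal_def cinner_scale_right\<close>)
    also have "\<dots> = cinner w x" using w fin by simp
    finally show ?thesis unfolding y_def by (simp add: cinner_diff_right cinner_sum_right[OF fin])
  qed
  show ?thesis
  proof (intro exI conjI)
    show "norm (of_real (1 / norm y) *s y) = 1"
      using \<open>y \<noteq> 0\<close> unfolding of_real_vector_scalar_mult by simp
    show "\<forall>v\<in>S. cinner v (of_real (1 / norm y) *s y) = 0"
      using y_orth by (simp add: cinner_scale_right)
  qed
qed

lemma hermitian_eigenvector_orthogonal_to_eigenvectors:
  fixes A :: "complex^'n^'n"
  assumes herm: "hermitian A" and fin: "finite S" and card: "card S < CARD('n)"
    and orth: "orthonormal S" and eig: "\<forall>v\<in>S. \<exists>c. A *v v = c *s v"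
  shows "\<exists>x. norm x = 1 \<and> (\<forall>v\<in>S. cinner v x = 0)
    \<and> A *v x = of_real (Re (cinner x (A *v x))) *s x"
proof -
  define C where "C = {x. \<forall>v\<in>S. cinner v x = 0}"
  define T where "T = sphere 0 1 \<inter> C"
  have C: "vec.subspace C"
    by (auto simp: vec.subspace_def C_def cinner_add_right cinner_scale_right)
  have "T \<noteq> {}"
    using orthonormal_complement_has_unit_vector[OF fin card orth] by (auto simp: T_def C_def)
  moreover have "compact T"
  proof -
    have "C = (\<Inter>v\<in>S. {x. cinner v x = 0})" by (auto simp: C_def)
    moreover have "closed {x. cinner v x = 0}" for v
      by (rule closed_Collect_eq) (auto intro: continuous_on_cinner_right continuous_intros)
    ultimately have "closed C" by auto
    then show ?thesis
      unfolding T_def by (intro compact_Int_closed compact_sphere)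
  qed
  ultimately obtain x where "x \<in> T"
    and max: "\<forall>z\<in>T. Re (cinner z (A *v z)) \<le> Re (cinner x (A *v x))"
    using continuous_attains_sup[OF _ _ continuous_on_cinner_quadratic] by blast
  then have x: "x \<in> C" "norm x = 1" by (auto simp: T_def)
  have "A *v x \<in> C"
  proof -
    have "cinner v (A *v x) = 0" if "v \<in> S" for v
    proof -
      obtain c where "A *v v = c *s v" using eig \<open>v \<in> S\<close> by auto
      then show ?thesis
        using x that by (simp add: cinner_hermitian[OF herm] cinner_scale_left C_def)
    qed
    then show ?thesis by (simp add: C_def)
  qed
  then have "A *v x = of_real (Re (cinner x (A *v x))) *s x"
    using max by (intro hermitian_rayleigh_maximizer_eigenvector[OF herm C x]) (auto simp: T_def)
  then show ?thesis using x by (auto simp: C_def)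
qed

lemma hermitian_orthonormal_eigenvectors:
  fixes A :: "complex^'n^'n"
  assumes herm: "hermitian A"
  shows "k \<le> CARD('n) \<Longrightarrow>
    \<exists>S. finite S \<and> card S = k \<and> orthonormal S \<and> (\<forall>v\<in>S. \<exists>c. A *v v = c *s v)"
proof (induction k)
  case 0
  show ?case by (intro exI[of _ "{}"]) (auto simp: orthonormal_def)
next
  case (Suc k)
  then obtain S where S: "finite S" "card S = k" "orthonormal S" "\<forall>v\<in>S. \<exists>c. A *v v = c *s v"
    by auto
  obtain x where x: "norm x = 1" "\<forall>v\<in>S. cinner v x = 0"
    "A *v x = of_real (Re (cinner x (A *v x))) *s x"
    using hermitian_eigenvector_orthogonal_to_eigenvectors[OF herm S(1)] Suc.prems S by auto
  have "cinner x x = 1" using x(1) by (simp add: cinner_self)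
  then have "x \<notin> S" using x(2) by auto
  have "cinner x v = 0" if "v \<in> S" for v using x(2) that cinner_commute[of x v] by simp
  then have "orthonormal (insert x S)"
    using S(3) x(2) \<open>cinner x x = 1\<close> by (auto simp: orthonormal_def)
  then show ?case
    using S x(3) \<open>x \<notin> S\<close> by (intro exI[of _ "insert x S"]) auto
qed

lemma cadj_mult: "cadj (X ** Y) = cadj Y ** cadj (X::complex^'n^'n)"
  by (simp add: vec_eq_iff cadj_def matrix_matrix_mult_def mult.commute)

lemma cadj_cadj [simp]: "cadj (cadj X) = X"
  by (simp add: vec_eq_iff cadj_def)

lemma cadj_rdiag [simp]: "cadj (rdiag a) = rdiag a"
  by (simp add: vec_eq_iff cadj_def rdiag_def)

lemma unitary_mult_cadj: "unitary U \<Longrightarrow> U ** cadj U = mat 1"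
  unfolding unitary_def using matrix_left_right_inverse by blast

lemma unitary_cadj_mult_unitary:
  assumes "unitary U" "unitary V" shows "unitary (cadj V ** U)"
proof -
  have "cadj (cadj V ** U) ** (cadj V ** U) = cadj U ** (V ** cadj V) ** U"
    by (simp add: cadj_mult matrix_mul_assoc)
  also have "\<dots> = mat 1"
    using assms unitary_mult_cadj[OF assms(2)] by (simp add: unitary_def)
  finally show ?thesis by (simp add: unitary_def)
qed

lemma matrix_mult_rdiag_entry: "(X ** rdiag a)$i$j = X$i$j * of_real (a$j)"
  by (simp add: matrix_matrix_mult_def rdiag_def if_distrib cong: if_cong)

lemma rdiag_matrix_mult_entry: "(rdiag a ** X)$i$j = of_real (a$i) * X$i$j"
  by (simp add: matrix_matrix_mult_def rdiag_def if_distrib if_distribR cong: if_cong)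

lemma rdiag_mult_rdiag: "rdiag a ** rdiag b = rdiag (\<chi> i. a$i * b$i)"
  by (simp add: vec_eq_iff matrix_mult_rdiag_entry) (simp add: rdiag_def)

lemma hermitian_unitary_conj_rdiag: "hermitian (U ** rdiag a ** cadj U)"
  unfolding hermitian_def by (simp add: cadj_mult matrix_mul_assoc)

lemma hermitian_diff_scaleR: "hermitian X \<Longrightarrow> hermitian Y \<Longrightarrow> hermitian (X - c *\<^sub>R Y)"
  unfolding hermitian_def by (simp add: vec_eq_iff cadj_def)

lemma hermitian_unitary_diagonalization:
  fixes A :: "complex^'n^'n"
  assumes herm: "hermitian A"
  shows "\<exists>U lam. unitary U \<and> A = U ** rdiag lam ** cadj U"
proof -
  obtain S where S: "finite S" "card S = CARD('n)" "orthonormal S" "\<forall>v\<in>S. \<exists>c. A *v v = c *s v"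
    using hermitian_orthonormal_eigenvectors[OF herm, of "CARD('n)"] by auto
  obtain f where f: "bij_betw f (UNIV::'n set) S"
    using finite_same_card_bij[of "UNIV::'n set" S] S(1,2) by auto
  have fS: "f j \<in> S" for j using f bij_betwE by blast
  have finj: "f i = f j \<Longrightarrow> i = j" for i j using f by (auto simp: bij_betw_def inj_on_def)
  define U where "U = (\<chi> i j. f j $ i)"
  define lam where "lam = (\<chi> j. Re (cinner (f j) (A *v f j)))"
  have eig: "A *v f j = of_real (lam$j) *s f j" for j
  proof -
    obtain c where c: "A *v f j = c *s f j" using S(4) fS by blast
    have "cinner (f j) (A *v f j) = c"
      using S(3) fS by (simp add: c cinner_scale_right orthonormal_def)
    moreover have "cinner (f j) (A *v f j) = of_real (lam $ j)"
      unfolding lam_def using hermitian_quadratic_real[OF herm] by simp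
    ultimately show ?thesis using c by simp
  qed
  have "(cadj U ** U) $ i $ j = cinner (f i) (f j)" for i j
    by (simp add: matrix_matrix_mult_def cadj_def U_def cinner_def)
  then have U: "unitary U"
    using S(3) fS finj by (auto simp: unitary_def vec_eq_iff mat_def orthonormal_def)
  have "(A ** U) $ i $ j = (A *v f j) $ i" for i j
    by (simp add: matrix_matrix_mult_def matrix_vector_mult_def U_def)
  moreover have "(U ** rdiag lam) $ i $ j = (of_real (lam$j) *s f j) $ i" for i j
    by (simp add: matrix_mult_rdiag_entry U_def mult.commute)
  ultimately have AU: "A ** U = U ** rdiag lam"
    using eig by (simp add: vec_eq_iff)
  have "A = A ** (U ** cadj U)" using unitary_mult_cadj[OF U] by simp
  also have "\<dots> = U ** rdiag lam ** cadj U" by (simp add: matrix_mul_assoc AU)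
  finally show ?thesis using U by blast
qed

text \<open>The unitary W = V^H U intertwines the two diagonal matrices, so it only connects equal
  eigenvalues and hence also intertwines their images under g.\<close>
lemma unitary_conj_rdiag_fun_eq:
  fixes U V :: "complex^'n^'n"
  assumes U: "unitary U" and V: "unitary V" and eq: "U ** rdiag a ** cadj U = V ** rdiag b ** cadj V"
  shows "U ** rdiag (\<chi> i. g (a$i)) ** cadj U = V ** rdiag (\<chi> i. g (b$i)) ** cadj V"
proof -
  define W where "W = cadj V ** U"
  have "W ** rdiag a = cadj V ** (U ** rdiag a ** cadj U) ** U"
    using U by (simp add: W_def matrix_mul_assoc[symmetric] unitary_def)
  also have "\<dots> = rdiag b ** W"
    unfolding eq using V
    by (simp add: W_def matrix_mul_assoc[symmetric]) (simp add: matrix_mul_assoc unitary_def)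
  finally have "W ** rdiag a = rdiag b ** W" .
  then have "W$i$j * of_real (a$j) = of_real (b$i) * W$i$j" for i j
    by (metis matrix_mult_rdiag_entry rdiag_matrix_mult_entry)
  then have "W$i$j = 0 \<or> a$j = b$i" for i j
    by (metis mult.commute mult_cancel_left of_real_eq_iff)
  then have "W$i$j * of_real (g (a$j)) = of_real (g (b$i)) * W$i$j" for i j
    by (metis mult.commute mult_zero_left)
  then have W_g: "W ** rdiag (\<chi> i. g (a$i)) = rdiag (\<chi> i. g (b$i)) ** W"
    by (simp add: vec_eq_iff matrix_mult_rdiag_entry rdiag_matrix_mult_entry)
  have "U ** rdiag (\<chi> i. g (a$i)) ** cadj U = V ** (W ** rdiag (\<chi> i. g (a$i))) ** cadj U"
    using unitary_mult_cadj[OF V] by (simp add: W_def matrix_mul_assoc)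
  also have "\<dots> = V ** rdiag (\<chi> i. g (b$i)) ** (W ** cadj U)"
    by (simp add: W_g matrix_mul_assoc)
  also have "\<dots> = V ** rdiag (\<chi> i. g (b$i)) ** cadj V"
    using unitary_mult_cadj[OF U] by (simp add: W_def matrix_mul_assoc[symmetric])
  finally show ?thesis .
qed

lemma herm_fun_unitary_conj_rdiag:
  assumes U: "unitary U"
  shows "herm_fun g (U ** rdiag a ** cadj U) = U ** rdiag (\<chi> i. g (a$i)) ** cadj U"
proof -
  let ?P = "\<lambda>B. \<exists>V b. unitary V \<and> U ** rdiag a ** cadj U = V ** rdiag b ** cadj V
              \<and> B = V ** rdiag (\<chi> i. g (b$i)) ** cadj V"
  have "?P (U ** rdiag (\<chi> i. g (a$i)) ** cadj U)" using U by blast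
  then have "?P (herm_fun g (U ** rdiag a ** cadj U))" unfolding herm_fun_def by (rule someI)
  then show ?thesis using unitary_conj_rdiag_fun_eq[OF U] by metis
qed

lemma unitary_conj_rdiag_mult:
  assumes "unitary U"
  shows "(U ** rdiag a ** cadj U) ** (U ** rdiag b ** cadj U) = U ** rdiag (\<chi> i. a$i * b$i) ** cadj U"
proof -
  have "(U ** rdiag a ** cadj U) ** (U ** rdiag b ** cadj U)
      = U ** rdiag a ** (cadj U ** U) ** rdiag b ** cadj U"
    by (simp add: matrix_mul_assoc)
  also have "\<dots> = U ** (rdiag a ** rdiag b) ** cadj U"
    using assms by (simp add: unitary_def matrix_mul_assoc)
  finally show ?thesis by (simp add: rdiag_mult_rdiag)
qed

lemma trace_unitary_conj_rdiag:
  assumes "unitary U" shows "trace (U ** rdiag a ** cadj U) = (\<Sum>i\<in>UNIV. complex_of_real (a$i))"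
proof -
  have "trace ((U ** rdiag a) ** cadj U) = trace (cadj U ** (U ** rdiag a))" by (rule trace_mul_sym)
  also have "\<dots> = trace (rdiag a)" using assms by (simp add: matrix_mul_assoc unitary_def)
  finally show ?thesis by (simp add: trace_def rdiag_def)
qed

lemma unitary_column_norms: assumes "unitary W" shows "(\<Sum>j\<in>UNIV. (cmod (W$j$l))\<^sup>2) = 1"
proof -
  have "(cadj W ** W)$l$l = 1" using assms by (simp add: unitary_def mat_def)
  moreover have "(cadj W ** W)$l$l = of_real (\<Sum>j\<in>UNIV. (cmod (W$j$l))\<^sup>2)"
    by (simp add: matrix_matrix_mult_def cadj_def cnj_mult_self del: of_real_power)
  ultimately show ?thesis using of_real_eq_1_iff by metis
qed

lemma unitary_row_norms: assumes "unitary W" shows "(\<Sum>l\<in>UNIV. (cmod (W$j$l))\<^sup>2) = 1"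
proof -
  have "(W ** cadj W)$j$j = 1" using unitary_mult_cadj[OF assms] by (simp add: mat_def)
  moreover have "(W ** cadj W)$j$j = of_real (\<Sum>l\<in>UNIV. (cmod (W$j$l))\<^sup>2)"
    using complex_norm_square by (simp add: matrix_matrix_mult_def cadj_def del: of_real_power)
  ultimately show ?thesis using of_real_eq_1_iff by metis
qed

text \<open>In the eigenbases of the two factors the trace of a product pairs the spectra through the
  doubly stochastic matrix of squared moduli of the change of basis W = V^H U.\<close>
lemma trace_mult_unitary_conj_rdiag:
  assumes U: "unitary U" and V: "unitary V"
  shows "trace ((U ** rdiag a ** cadj U) ** (V ** rdiag b ** cadj V))
     = of_real (\<Sum>l\<in>UNIV. a$l * (\<Sum>j\<in>UNIV. (cmod ((cadj V ** U)$j$l))\<^sup>2 * b$j))"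
proof -
  define W where "W = cadj V ** U"
  have "trace ((U ** rdiag a ** cadj U) ** (V ** rdiag b ** cadj V))
      = trace (U ** (rdiag a ** cadj U ** V ** rdiag b ** cadj V))" by (simp add: matrix_mul_assoc)
  also have "\<dots> = trace ((rdiag a ** cadj U ** V ** rdiag b ** cadj V) ** U)" by (rule trace_mul_sym)
  also have "\<dots> = trace (rdiag a ** (cadj W ** (rdiag b ** W)))"
    by (simp add: W_def cadj_mult matrix_mul_assoc)
  also have "\<dots> = (\<Sum>l\<in>UNIV. of_real (a$l) * (cadj W ** (rdiag b ** W))$l$l)"
    by (simp add: trace_def rdiag_matrix_mult_entry)
  also have "\<dots> = (\<Sum>l\<in>UNIV. of_real (a$l) * (\<Sum>j\<in>UNIV. cnj (W$j$l) * W$j$l * of_real (b$j)))"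
    unfolding matrix_matrix_mult_def[of "cadj W"] by (simp add: rdiag_matrix_mult_entry cadj_def mult_ac)
  also have "\<dots> = of_real (\<Sum>l\<in>UNIV. a$l * (\<Sum>j\<in>UNIV. (cmod (W$j$l))\<^sup>2 * b$j))"
    by (simp add: cnj_mult_self del: of_real_power)
  finally show ?thesis unfolding W_def .
qed

lemma Re_trace_mult_diff_scaleR:
  fixes X A B :: "complex^'n^'n"
  shows "Re (trace (X ** (A - c *\<^sub>R B))) = Re (trace (X ** A)) - c * Re (trace (X ** B))"
proof -
  have "X ** (A - c *\<^sub>R B) = X ** A - c *\<^sub>R (X ** B)"
    by (simp add: vec_eq_iff matrix_matrix_mult_def right_diff_distrib sum_subtractf scaleR_sum_right)
  then show ?thesis
    by (simp add: trace_sub trace_def sum_distrib_left sum_subtractf)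
qed

lemma gibbs_inequality:
  fixes p c :: "'a \<Rightarrow> real"
  assumes S: "finite S" and p: "\<And>l. l \<in> S \<Longrightarrow> p l > 0" and ps: "(\<Sum>l\<in>S. p l) = 1"
  shows "(\<Sum>l\<in>S. p l * (c l - ln (p l))) \<le> ln (\<Sum>l\<in>S. exp (c l))"
proof -
  have "S \<noteq> {}" using ps by auto
  have "(\<Sum>l\<in>S. p l * ln (exp (c l) / p l)) \<le> ln (\<Sum>l\<in>S. p l *\<^sub>R (exp (c l) / p l))"
    using S \<open>S \<noteq> {}\<close> ln_concave ps p by (intro concave_on_sum) (auto simp: less_imp_le)
  moreover have "p l * ln (exp (c l) / p l) = p l * (c l - ln (p l))" if "l \<in> S" for l
    using p[OF that] by (simp add: ln_div)
  moreover have "p l *\<^sub>R (exp (c l) / p l) = exp (c l)" if "l \<in> S" for l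
    using p[OF that] by simp
  ultimately show ?thesis by (simp cong: sum.cong)
qed

lemma log_sum_exp_doubly_stochastic_le:
  fixes P :: "'a \<Rightarrow> 'b \<Rightarrow> real" and m :: "'a \<Rightarrow> real"
  assumes A: "finite A" and B: "finite B" "B \<noteq> {}" and P: "\<And>j l. P j l \<ge> 0"
    and cols: "\<And>l. l \<in> B \<Longrightarrow> (\<Sum>j\<in>A. P j l) = 1"
    and rows: "\<And>j. j \<in> A \<Longrightarrow> (\<Sum>l\<in>B. P j l) = 1"
  shows "ln (\<Sum>l\<in>B. exp (\<Sum>j\<in>A. P j l * m j)) \<le> ln (\<Sum>j\<in>A. exp (m j))"
proof -
  have jensen: "exp (\<Sum>j\<in>A. P j l * m j) \<le> (\<Sum>j\<in>A. P j l * exp (m j))" if "l \<in> B" for l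
  proof -
    have "A \<noteq> {}" using cols[OF that] by auto
    then show ?thesis
      using A exp_convex cols[OF that] P by (intro convex_on_sum[where y = m, simplified]) auto
  qed
  have "(\<Sum>l\<in>B. exp (\<Sum>j\<in>A. P j l * m j)) \<le> (\<Sum>l\<in>B. \<Sum>j\<in>A. P j l * exp (m j))"
    by (rule sum_mono) (rule jensen)
  also have "\<dots> = (\<Sum>j\<in>A. exp (m j))"
    by (subst sum.swap) (simp add: rows flip: sum_distrib_right)
  finally show ?thesis
    using B by (intro ln_mono) (auto intro: sum_pos)
qed

lemma gibbs_variational_inequality:
  fixes H :: "complex^'n^'n"
  assumes U: "unitary U" and p_pos: "\<And>i. p$i > 0" and p_sum: "(\<Sum>i\<in>UNIV. p$i) = 1"
    and H: "hermitian H"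
  shows "Re (trace ((U ** rdiag p ** cadj U) ** H)) - (\<Sum>i\<in>UNIV. p$i * ln (p$i))
    \<le> ln (Re (trace (mexp H)))"
proof -
  obtain V mu where V: "unitary V" and H_eq: "H = V ** rdiag mu ** cadj V"
    using hermitian_unitary_diagonalization[OF H] by blast
  define P where "P j l = (cmod ((cadj V ** U)$j$l))\<^sup>2" for j l
  define c where "c l = (\<Sum>j\<in>UNIV. P j l * mu$j)" for l
  have "Re (trace ((U ** rdiag p ** cadj U) ** H)) - (\<Sum>i\<in>UNIV. p$i * ln (p$i))
      = (\<Sum>l\<in>UNIV. p$l * (c l - ln (p$l)))"
    by (simp add: H_eq trace_mult_unitary_conj_rdiag[OF U V] P_def c_def right_diff_distrib
        sum_subtractf)
  also have "\<dots> \<le> ln (\<Sum>l\<in>UNIV. exp (c l))"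
    using p_pos p_sum by (intro gibbs_inequality) auto
  also have "\<dots> \<le> ln (\<Sum>j\<in>UNIV. exp (mu$j))"
    unfolding c_def P_def
    using unitary_column_norms unitary_row_norms unitary_cadj_mult_unitary[OF U V]
    by (intro log_sum_exp_doubly_stochastic_le) auto
  also have "\<dots> = ln (Re (trace (mexp H)))"
    unfolding mexp_def H_eq herm_fun_unitary_conj_rdiag[OF V] trace_unitary_conj_rdiag[OF V]
    by (simp add: Re_sum)
  finally show ?thesis .
qed

lemma density_invertible_diagonalization:
  fixes \<rho> :: "complex^'n^'n"
  assumes "density \<rho>" and "invertible \<rho>"
  obtains U p where "unitary U" "\<rho> = U ** rdiag p ** cadj U" "\<And>i. p$i > 0" "(\<Sum>i\<in>UNIV. p$i) = 1"
proof -
  have herm: "hermitian \<rho>" and psd: "\<And>v. 0 \<le> Re (\<Sum>i\<in>UNIV. cnj (v$i) * (\<rho> *v v)$i)"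
    and tr: "trace \<rho> = 1"
    using assms(1) by (auto simp: density_def psd_def)
  obtain U p where U: "unitary U" and \<rho>_eq: "\<rho> = U ** rdiag p ** cadj U"
    using hermitian_unitary_diagonalization[OF herm] by blast
  have "p$j > 0" for j
  proof -
    define v where "v = column j U"
    have "\<rho> ** U = U ** rdiag p"
      using U by (simp add: \<rho>_eq matrix_mul_assoc[symmetric] unitary_def)
    moreover have "(\<rho> *v v)$i = (\<rho> ** U)$i$j" for i
      by (simp add: matrix_vector_mult_def matrix_matrix_mult_def v_def column_def)
    ultimately have \<rho>v: "\<rho> *v v = of_real (p$j) *s v"
      by (simp add: vec_eq_iff matrix_mult_rdiag_entry v_def column_def mult.commute)
    have "cinner v v = 1"
      using U by (simp add: v_def column_def cinner_def unitary_def vec_eq_iff mat_def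
          matrix_matrix_mult_def cadj_def)
    then have "cinner v (\<rho> *v v) = of_real (p$j)"
      by (simp add: \<rho>v cinner_scale_right)
    then have "p$j \<ge> 0"
      using psd[of v] by (simp add: cinner_def)
    moreover have "p$j \<noteq> 0"
    proof
      assume "p$j = 0"
      obtain B where "B ** \<rho> = mat 1" using assms(2) invertible_left_inverse by blast
      then have "v = B *v (\<rho> *v v)" by (simp add: matrix_vector_mul_assoc)
      then show False using \<open>p$j = 0\<close> \<rho>v \<open>cinner v v = 1\<close> by simp
    qed
    ultimately show ?thesis by simp
  qed
  moreover have "(\<Sum>i\<in>UNIV. p$i) = 1"
    using tr unfolding \<rho>_eq trace_unitary_conj_rdiag[OF U] by (metis of_real_eq_1_iff of_real_sum)
  ultimately show ?thesis using that U \<rho>_eq by blast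
qed

lemma qrel_ent_md_step:
  fixes \<rho> G :: "complex^'n^'n"
  assumes H: "hermitian (mlog \<rho> - \<alpha> *\<^sub>R G)" and tr: "trace \<rho> = 1"
  shows "qrel_ent (md_step \<rho> G \<alpha>) \<rho>
    = - ln (Re (trace (mexp (mlog \<rho> - \<alpha> *\<^sub>R G)))) - \<alpha> * Re (trace (md_step \<rho> G \<alpha> ** G))"
proof -
  define \<sigma> where "\<sigma> = md_step \<rho> G \<alpha>"
  obtain V mu where V: "unitary V" and H_eq: "mlog \<rho> - \<alpha> *\<^sub>R G = V ** rdiag mu ** cadj V"
    using hermitian_unitary_diagonalization[OF H] by blast
  define Z where "Z = (\<Sum>i\<in>UNIV. exp (mu$i))"
  define q where "q = (\<chi> i. exp (mu$i) / Z)"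
  have "Z > 0" unfolding Z_def by (intro sum_pos) auto
  have tr_mexp: "trace (mexp (mlog \<rho> - \<alpha> *\<^sub>R G)) = of_real Z"
    unfolding mexp_def H_eq herm_fun_unitary_conj_rdiag[OF V] trace_unitary_conj_rdiag[OF V]
    by (simp add: Z_def)
  have entry: "(V ** rdiag a ** cadj V)$i$j = (\<Sum>k\<in>UNIV. V$i$k * of_real (a$k) * cnj (V$j$k))"
    for a i j
    by (simp add: matrix_matrix_mult_def[of "V ** rdiag a"] matrix_mult_rdiag_entry cadj_def)
  have \<sigma>_eq: "\<sigma> = V ** rdiag q ** cadj V"
    unfolding \<sigma>_def md_step_def Let_def tr_mexp
    unfolding mexp_def H_eq herm_fun_unitary_conj_rdiag[OF V]
    by (simp add: vec_eq_iff entry q_def sum_divide_distrib)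
  have q_sum: "(\<Sum>i\<in>UNIV. q$i) = 1"
    using \<open>Z > 0\<close> by (simp add: q_def Z_def flip: sum_divide_distrib)
  have ln_q: "ln (q$i) = mu$i - ln Z" for i
    using \<open>Z > 0\<close> by (simp add: q_def ln_div)
  have entropy: "Re (trace (herm_fun (\<lambda>x. x * ln x) \<sigma>)) = (\<Sum>i\<in>UNIV. q$i * mu$i) - ln Z"
    unfolding \<sigma>_eq herm_fun_unitary_conj_rdiag[OF V] trace_unitary_conj_rdiag[OF V]
    using q_sum by (simp add: Re_sum ln_q right_diff_distrib sum_subtractf flip: sum_distrib_right)
  have "Re (trace (\<sigma> ** (mlog \<rho> - \<alpha> *\<^sub>R G))) = (\<Sum>i\<in>UNIV. q$i * mu$i)"
    unfolding \<sigma>_eq H_eq unitary_conj_rdiag_mult[OF V] trace_unitary_conj_rdiag[OF V]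
    by (simp add: Re_sum)
  then have cross:
    "Re (trace (\<sigma> ** mlog \<rho>)) = (\<Sum>i\<in>UNIV. q$i * mu$i) + \<alpha> * Re (trace (\<sigma> ** G))"
    unfolding Re_trace_mult_diff_scaleR by simp
  have "trace \<sigma> = 1"
    unfolding \<sigma>_eq trace_unitary_conj_rdiag[OF V] using q_sum by (metis of_real_1 of_real_sum)
  then have "trace (\<sigma> - \<rho>) = 0"
    using tr by (simp add: trace_sub)
  then show ?thesis
    unfolding qrel_ent_def \<sigma>_def[symmetric] tr_mexp using entropy cross by simp
qed

lemma mat_inner_hermitian_diff:
  assumes "hermitian G"
  shows "mat_inner G (X - Y) = trace (X ** G) - trace (Y ** G)"
proof -
  have "G ** (X - Y) = G ** X - G ** Y"
    by (simp add: vec_eq_iff matrix_matrix_mult_def right_diff_distrib sum_subtractf)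
  then show ?thesis
    using assms by (simp add: mat_inner_def hermitian_def trace_sub trace_mul_sym[of G])
qed

text \<open>The inequality holds for every Hermitian G.\<close>
theorem lemma5:
  fixes f :: "complex^'n^'n \<Rightarrow> real" and \<rho> G :: "complex^'n^'n" and \<alpha> :: real
  assumes "convex_on {A. hermitian A} f"
    and "density \<rho>" and "invertible \<rho>"
    and "hermitian G"
    and "(f has_derivative (\<lambda>H. Re (mat_inner G H))) (at \<rho> within {A. hermitian A})"
    and "\<alpha> > 0"
  shows "Re (mat_inner G (md_step \<rho> G \<alpha> - \<rho>)) \<le> - qrel_ent (md_step \<rho> G \<alpha>) \<rho> / \<alpha>"
proof -
  obtain U p where U: "unitary U" and \<rho>_eq: "\<rho> = U ** rdiag p ** cadj U"
    and p: "\<And>i. p$i > 0" "(\<Sum>i\<in>UNIV. p$i) = 1"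
    using density_invertible_diagonalization[OF assms(2,3)] by blast
  have log_\<rho>: "mlog \<rho> = U ** rdiag (\<chi> i. ln (p$i)) ** cadj U"
    unfolding mlog_def \<rho>_eq by (rule herm_fun_unitary_conj_rdiag[OF U])
  define H where "H = mlog \<rho> - \<alpha> *\<^sub>R G"
  have H: "hermitian H"
    unfolding H_def log_\<rho> using assms(4) by (intro hermitian_diff_scaleR hermitian_unitary_conj_rdiag)
  have "Re (trace (\<rho> ** mlog \<rho>)) = (\<Sum>i\<in>UNIV. p$i * ln (p$i))"
    unfolding log_\<rho> unfolding \<rho>_eq unitary_conj_rdiag_mult[OF U] trace_unitary_conj_rdiag[OF U]
    by (simp add: Re_sum)
  then have gibbs: "- \<alpha> * Re (trace (\<rho> ** G)) \<le> ln (Re (trace (mexp H)))"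
    using gibbs_variational_inequality[OF U p H]
    unfolding \<rho>_eq[symmetric] H_def Re_trace_mult_diff_scaleR by simp
  have "trace \<rho> = 1" using assms(2) by (simp add: density_def)
  then have "qrel_ent (md_step \<rho> G \<alpha>) \<rho>
      = - ln (Re (trace (mexp H))) - \<alpha> * Re (trace (md_step \<rho> G \<alpha> ** G))"
    using qrel_ent_md_step H unfolding H_def by blast
  then show ?thesis
    using gibbs assms(6) unfolding mat_inner_hermitian_diff[OF assms(4)] by (simp add: field_simps)
qed

end
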